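(* Let $k_1,\dots,k_d$ be distinct elements of $[n-1]$ and let $k=\min\{k_1,\dots,k_d\}$. If there is a chain $(w=v_1,v_2,\dots,v_{d+1}=w_0)$ compatible with $(k_1,\dots,k_d)$, then $w(i)=n+1-i$ for all $i\in[k-1]$.
   Context: Permutations in one-line notation; $w_0=[n,\dots,1]$; $wt_{i,j}$ is $w$ with positions $i<j$ swapped; $\ell$ the number of inversions. $u\lessdot w$ iff $w=ut_{i,j}$, $i<j$, $\ell(w)=\ell(u)+1$; $u\lessdot_k w$ iff moreover $i\le k<j$. A $k$-chain $v_1\lessdot_k\cdots\lessdot_k v_m$ ($m\ge1$) is increasing if the smaller of the two values exchanged at each step strictly increases along the chain. $(v_1,\dots,v_{d+1})$ is compatible with $(k_1,\dots,k_d)$ if for each $s$ there is an increasing $k_s$-chain from $v_s$ to $v_{s+1}$. *)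

theory Defs
  imports "HOL-Combinatorics.Combinatorics"
begin

text \<open>Permutations of [n] = {1..n} are functions nat => nat permuting {1..n}
 (one-line notation: w i is the value in position i).\<close>

definition longest :: "nat \<Rightarrow> nat \<Rightarrow> nat" where
  "longest n = (\<lambda>i. if 1 \<le> i \<and> i \<le> n then n + 1 - i else i)"

definition inv_num :: "nat \<Rightarrow> (nat \<Rightarrow> nat) \<Rightarrow> nat" where
  "inv_num n w = card {(i, j). 1 \<le> i \<and> i < j \<and> j \<le> n \<and> w i > w j}"

definition swap_pos :: "(nat \<Rightarrow> nat) \<Rightarrow> nat \<Rightarrow> nat \<Rightarrow> nat \<Rightarrow> nat" where
  "swap_pos w i j = w \<circ> Transposition.transpose i j"

definition kcover :: "nat \<Rightarrow> nat \<Rightarrow> (nat \<Rightarrow> nat) \<Rightarrow> (nat \<Rightarrow> nat) \<Rightarrow> nat \<Rightarrow> nat \<Rightarrow> bool" where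
  "kcover n k u w i j \<longleftrightarrow> u permutes {1..n} \<and> 1 \<le> i \<and> i < j \<and> j \<le> n \<and>
     w = swap_pos u i j \<and> inv_num n w = inv_num n u + 1 \<and> i \<le> k \<and> k < j"

definition inc_kchain :: "nat \<Rightarrow> nat \<Rightarrow> (nat \<Rightarrow> nat) list \<Rightarrow> bool" where
  "inc_kchain n k vs \<longleftrightarrow> vs \<noteq> [] \<and> (\<forall>v \<in> set vs. v permutes {1..n}) \<and>
     (\<exists>as :: nat list. length as = length vs - 1 \<and> sorted_wrt (<) as \<and>
       (\<forall>s < length vs - 1. \<exists>i j. kcover n k (vs ! s) (vs ! Suc s) i j \<and>
            as ! s = min ((vs ! s) i) ((vs ! s) j)))"

definition compatible :: "nat \<Rightarrow> (nat \<Rightarrow> nat) list \<Rightarrow> nat list \<Rightarrow> bool" where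
  "compatible n vs ks \<longleftrightarrow> length vs = length ks + 1 \<and>
     (\<forall>s < length ks. \<exists>c. inc_kchain n (ks ! s) c \<and> hd c = vs ! s \<and> last c = vs ! Suc s)"

end

theory Submission
  imports Defs
begin

(*
  Call c a right-to-left maximum position of v if v c exceeds every value to its right;
  every position is one for w0. Counting inversions shows that in a cover u \<lessdot> u t_ij
  the exchanged values satisfy u i < u j and no position strictly between i and j carries
  a value between them. Consequently, walking an increasing k-chain backwards, a
  right-to-left maximum position c \<noteq> k of the last permutation stays one as long as k is
  one at the end: a step with c \<noteq> i preserves it, and a step exchanging c = i < k would
  move v c past k to position j, after which neither v c nor the smaller value at k is
  ever moved again (all later exchanged values are larger), contradicting that k is a
  right-to-left maximum position at the end. Applied along the compatible chain, every
  position outside {k_1, ..., k_d}, in particular every i < k, is a right-to-left maximum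
  position of w, and this forces w i = n + 1 - i.
*)

definition inversions :: "nat \<Rightarrow> (nat \<Rightarrow> nat) \<Rightarrow> (nat \<times> nat) set" where
  "inversions n x = {(p, q). 1 \<le> p \<and> p < q \<and> q \<le> n \<and> x p > x q}"

lemma inv_num_eq_card_inversions: "inv_num n x = card (inversions n x)"
  by (simp add: inv_num_def inversions_def)

lemma finite_inversions [simp]: "finite (inversions n x)"
  by (rule finite_subset[of _ "{1..n} \<times> {1..n}"]) (auto simp: inversions_def)

text \<open>Transposing positions i and j matches the inversions of u and of swap_pos u i j outside
  these pairs bijectively, so only these pairs can change the number of inversions.\<close>

definition end_pairs :: "nat \<Rightarrow> nat \<Rightarrow> (nat \<times> nat) set" where
  "end_pairs i j = {(p, q). (p = i \<and> i < q \<and> q \<le> j) \<or> (i \<le> p \<and> p < j \<and> q = j)}"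

lemma swap_pos_apply: "swap_pos u i j p = u (if p = i then j else if p = j then i else p)"
  by (simp add: swap_pos_def Transposition.transpose_def)

lemma swap_pos_swap_pos [simp]: "swap_pos (swap_pos u i j) i j = u"
  by (simp add: swap_pos_def comp_assoc)

lemma transpose_pair_mem_inversions_diff_end_pairs:
  assumes "1 \<le> i" "i < j" "j \<le> n" "(p, q) \<in> inversions n u - end_pairs i j"
  shows "(Transposition.transpose i j p, Transposition.transpose i j q)
           \<in> inversions n (swap_pos u i j) - end_pairs i j"
  using assms by (auto simp: inversions_def end_pairs_def swap_pos_def Transposition.transpose_def)

lemma inv_num_swap_pos_balance:
  assumes "1 \<le> i" "i < j" "j \<le> n"
  shows "inv_num n (swap_pos u i j) + card (inversions n u \<inter> end_pairs i j)
       = inv_num n u + card (inversions n (swap_pos u i j) \<inter> end_pairs i j)"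
proof -
  let ?t = "map_prod (Transposition.transpose i j) (Transposition.transpose i j)"
  have "bij_betw ?t (inversions n u - end_pairs i j) (inversions n (swap_pos u i j) - end_pairs i j)"
  proof (rule bij_betw_byWitness[where f' = ?t])
    show "?t ` (inversions n u - end_pairs i j) \<subseteq> inversions n (swap_pos u i j) - end_pairs i j"
      using transpose_pair_mem_inversions_diff_end_pairs[OF assms] by auto
    show "?t ` (inversions n (swap_pos u i j) - end_pairs i j) \<subseteq> inversions n u - end_pairs i j"
      using transpose_pair_mem_inversions_diff_end_pairs[OF assms, of _ _ "swap_pos u i j"] by auto
  qed auto
  then have "card (inversions n u - end_pairs i j) = card (inversions n (swap_pos u i j) - end_pairs i j)"
    by (rule bij_betw_same_card)
  then show ?thesis
    using card_Int_Diff[OF finite_inversions, of n u "end_pairs i j"]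
      card_Int_Diff[OF finite_inversions, of n "swap_pos u i j" "end_pairs i j"]
    by (simp add: inv_num_eq_card_inversions)
qed

lemma swap_pos_cover_less:
  assumes inj: "inj_on u {1..n}" and ij: "1 \<le> i" "i < j" "j \<le> n"
    and cover: "inv_num n (swap_pos u i j) = inv_num n u + 1"
  shows "u i < u j"
proof (rule ccontr)
  assume "\<not> u i < u j"
  moreover have "u i \<noteq> u j" using inj ij by (auto dest: inj_onD)
  ultimately have gt: "u j < u i" by simp
  have "inversions n (swap_pos u i j) \<inter> end_pairs i j \<subseteq> inversions n u \<inter> end_pairs i j - {(i, j)}"
    using gt by (auto simp: inversions_def end_pairs_def swap_pos_apply)
  moreover have "(i, j) \<in> inversions n u \<inter> end_pairs i j"
    using ij gt by (simp add: inversions_def end_pairs_def)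
  ultimately have "card (inversions n (swap_pos u i j) \<inter> end_pairs i j)
                 < card (inversions n u \<inter> end_pairs i j)"
    by (intro psubset_card_mono) auto
  then show False
    using inv_num_swap_pos_balance[OF ij, of u] cover by linarith
qed

lemma swap_pos_cover_no_value_between:
  assumes ij: "1 \<le> i" "i < j" "j \<le> n" and q: "i < q" "q < j"
    and cover: "inv_num n (swap_pos u i j) = inv_num n u + 1"
  shows "\<not> (u i < u q \<and> u q < u j)"
proof
  assume between: "u i < u q \<and> u q < u j"
  let ?new = "{(i, j), (i, q), (q, j)}"
  have "(p, p') \<in> inversions n (swap_pos u i j) \<inter> end_pairs i j"
    if old: "(p, p') \<in> inversions n u \<inter> end_pairs i j" for p p'
  proof -
    have "p = i \<and> p' < j \<or> i < p \<and> p < j \<and> p' = j"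
      using old between by (cases "(p, p') = (i, j)") (auto simp: inversions_def end_pairs_def)
    moreover have "swap_pos u i j i = u j" "swap_pos u i j j = u i"
      by (simp_all add: swap_pos_apply)
    moreover have "swap_pos u i j x = u x" if "i < x" "x < j" for x
      using that by (simp add: swap_pos_apply)
    ultimately show ?thesis
      using old between by (auto simp: inversions_def end_pairs_def)
  qed
  moreover have "?new \<subseteq> inversions n (swap_pos u i j) \<inter> end_pairs i j"
    using ij q between by (auto simp: inversions_def end_pairs_def swap_pos_apply)
  ultimately have sub: "inversions n u \<inter> end_pairs i j \<union> ?new
                 \<subseteq> inversions n (swap_pos u i j) \<inter> end_pairs i j"
    by auto
  have "card (inversions n u \<inter> end_pairs i j) + 3 = card (inversions n u \<inter> end_pairs i j \<union> ?new)"
    using q between by (subst card_Un_disjoint) (simp, simp, auto simp: inversions_def)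
  also have "\<dots> \<le> card (inversions n (swap_pos u i j) \<inter> end_pairs i j)"
    using sub by (intro card_mono) simp_all
  finally show False
    using inv_num_swap_pos_balance[OF ij, of u] cover by linarith
qed

lemma kcover_less:
  assumes "kcover n k u w i j"
  shows "u i < u j"
  using assms swap_pos_cover_less[OF permutes_inj_on] by (auto simp: kcover_def)

lemma kcover_no_value_between:
  assumes "kcover n k u w i j" "i < q" "q < j"
  shows "\<not> (u i < u q \<and> u q < u j)"
  using assms swap_pos_cover_no_value_between by (auto simp: kcover_def)

lemma kcover_fixes_smaller_values:
  assumes "kcover n k u w i j" "u p < u i"
  shows "w p = u p"
proof -
  have "p \<noteq> i" "p \<noteq> j" using assms kcover_less[OF assms(1)] by auto
  then show ?thesis using assms(1) by (simp add: kcover_def swap_pos_apply)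
qed

definition is_rl_max :: "nat \<Rightarrow> (nat \<Rightarrow> nat) \<Rightarrow> nat \<Rightarrow> bool" where
  "is_rl_max n v c \<longleftrightarrow> (\<forall>q. c < q \<and> q \<le> n \<longrightarrow> v q < v c)"

lemma is_rl_max_longest: "1 \<le> c \<Longrightarrow> is_rl_max n (longest n) c"
  by (auto simp: is_rl_max_def longest_def)

lemma is_rl_max_kcover_source:
  assumes cover: "kcover n k u w i j" and "c \<noteq> i" and rl: "is_rl_max n w c"
  shows "is_rl_max n u c"
  unfolding is_rl_max_def
proof (intro allI impI)
  fix q assume q: "c < q \<and> q \<le> n"
  have ij: "1 \<le> i" "i < j" "j \<le> n" and w: "w = swap_pos u i j"
    using cover by (auto simp: kcover_def)
  have w_apply: "w x = u (if x = i then j else if x = j then i else x)" for x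
    using w by (simp add: swap_pos_apply)
  have w_less: "w x < w c" if "c < x" "x \<le> n" for x
    using rl that by (simp add: is_rl_max_def)
  have "u i < u j" using kcover_less[OF cover] .
  consider "c = j" | "c \<noteq> j" "q = i" | "c \<noteq> j" "q = j" "c < i" | "c \<noteq> j" "q = j" "i < c"
    | "c \<noteq> j" "q \<noteq> i" "q \<noteq> j"
    using \<open>c \<noteq> i\<close> by fastforce
  then show "u q < u c"
  proof cases
    case 4
    have "inj_on u {1..n}" using cover by (auto simp: kcover_def intro: permutes_inj_on)
    then have "u c \<noteq> u j" using \<open>c \<noteq> j\<close> 4 ij q by (auto dest: inj_onD)
    moreover have "u i < u c" using w_less[of j] 4 q \<open>c \<noteq> i\<close> by (simp add: w_apply)
    ultimately show ?thesis
      using kcover_no_value_between[OF cover, of c] 4 q by auto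
  qed (use w_less[of q] w_less[of j] w_less[of i] q ij \<open>c \<noteq> i\<close> \<open>u i < u j\<close> in
      \<open>auto simp: w_apply\<close>)
qed

text \<open>A recursive form of inc_kchain, where a bounds from below the smaller
  exchanged values of all remaining steps.\<close>

inductive inc_kchain_from :: "nat \<Rightarrow> nat \<Rightarrow> nat \<Rightarrow> (nat \<Rightarrow> nat) list \<Rightarrow> bool" for n k where
  single: "inc_kchain_from n k a [v]"
| cover: "kcover n k v (hd vs) i j \<Longrightarrow> a \<le> v i \<Longrightarrow> inc_kchain_from n k (Suc (v i)) vs
    \<Longrightarrow> inc_kchain_from n k a (v # vs)"

lemma inc_kchain_from_nonempty: "inc_kchain_from n k a vs \<Longrightarrow> vs \<noteq> []"
  by (induction rule: inc_kchain_from.induct) auto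

lemma inc_kchain_from_witnesses:
  assumes "vs \<noteq> []" "length as = length vs - 1" "sorted_wrt (<) as" "\<forall>b\<in>set as. a \<le> b"
    and "\<forall>s < length vs - 1. \<exists>i j. kcover n k (vs ! s) (vs ! Suc s) i j \<and>
           as ! s = min ((vs ! s) i) ((vs ! s) j)"
  shows "inc_kchain_from n k a vs"
  using assms
proof (induction vs arbitrary: as a)
  case Nil
  then show ?case by simp
next
  case (Cons v vs)
  show ?case
  proof (cases "vs = []")
    case True
    then show ?thesis by (simp add: inc_kchain_from.single)
  next
    case False
    then obtain b as' where as: "as = b # as'"
      using Cons.prems(2) by (cases as) auto
    obtain i j where step: "kcover n k v (hd vs) i j" "b = min (v i) (v j)"
      using Cons.prems(5) False as by (auto simp: hd_conv_nth)
    then have "b = v i" using kcover_less[OF step(1)] by simp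
    have "\<forall>s < length vs - 1. \<exists>i j. kcover n k (vs ! s) (vs ! Suc s) i j \<and>
            as' ! s = min ((vs ! s) i) ((vs ! s) j)"
    proof (intro allI impI)
      fix s assume "s < length vs - 1"
      then show "\<exists>i j. kcover n k (vs ! s) (vs ! Suc s) i j \<and> as' ! s = min ((vs ! s) i) ((vs ! s) j)"
        using Cons.prems(5)[rule_format, of "Suc s"] as by simp
    qed
    then have "inc_kchain_from n k (Suc b) vs"
      using Cons.prems(2-4) False as by (intro Cons.IH) auto
    then show ?thesis
      using step(1) Cons.prems(4) as \<open>b = v i\<close> by (auto intro: inc_kchain_from.cover)
  qed
qed

lemma inc_kchain_imp_inc_kchain_from: "inc_kchain n k vs \<Longrightarrow> inc_kchain_from n k 0 vs"
  unfolding inc_kchain_def by (auto intro: inc_kchain_from_witnesses)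

lemma inc_kchain_from_last_eq:
  assumes "inc_kchain_from n k a vs" "hd vs p < a"
  shows "last vs p = hd vs p"
  using assms
proof (induction rule: inc_kchain_from.induct)
  case (single a v)
  then show ?case by simp
next
  case (cover v vs i j a)
  have "hd vs p = v p"
    using cover.prems cover.hyps(2) by (intro kcover_fixes_smaller_values[OF cover.hyps(1)]) simp
  then show ?case
    using cover inc_kchain_from_nonempty by auto
qed

lemma is_rl_max_hd_inc_kchain_from:
  assumes "inc_kchain_from n k a vs" "is_rl_max n (last vs) k" "is_rl_max n (last vs) c" "c \<noteq> k"
  shows "is_rl_max n (hd vs) c"
  using assms
proof (induction rule: inc_kchain_from.induct)
  case (single a v)
  then show ?case by simp
next
  case (cover v vs i j a)
  have "vs \<noteq> []" using cover.hyps(3) by (rule inc_kchain_from_nonempty)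
  then have rl_last: "is_rl_max n (last vs) k" "is_rl_max n (last vs) c"
    using cover.prems by auto
  then have rl_hd: "is_rl_max n (hd vs) c" using cover.IH \<open>c \<noteq> k\<close> by blast
  show ?case
  proof (cases "c = i")
    case False
    then show ?thesis using is_rl_max_kcover_source[OF cover.hyps(1) False rl_hd] by simp
  next
    case True
    txt \<open>The value v i moves to position j > k, above the value at k, and both stay put.\<close>
    have ij: "1 \<le> i" "i < k" "k < j" "j \<le> n" and w: "hd vs = swap_pos v i j"
      and inj: "inj_on v {1..n}"
      using cover.hyps(1) True \<open>c \<noteq> k\<close> by (auto simp: kcover_def intro: permutes_inj_on)
    have w_k: "hd vs k = v k" and w_i: "hd vs i = v j" and w_j: "hd vs j = v i"
      using w ij by (simp_all add: swap_pos_apply)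
    have "hd vs k < hd vs i" using rl_hd True ij by (simp add: is_rl_max_def)
    then have "\<not> v i < v k"
      using kcover_no_value_between[OF cover.hyps(1), of k] ij w_k w_i by auto
    moreover have "v k \<noteq> v i" using inj ij by (auto dest: inj_onD)
    ultimately have small: "hd vs k < hd vs j" using w_k w_j by simp
    have "last vs k = hd vs k" "last vs j = hd vs j"
      using small w_j by (simp_all add: inc_kchain_from_last_eq[OF cover.hyps(3)])
    then have "\<not> is_rl_max n (last vs) k"
      using small ij by (auto simp: is_rl_max_def)
    then show ?thesis using rl_last by simp
  qed
qed

lemma compatible_ConsE:
  assumes "compatible n vs (k # ks)"
  obtains v vs' ch where "vs = v # vs'" "compatible n vs' ks"
    "inc_kchain n k ch" "hd ch = v" "last ch = hd vs'"
proof -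
  have "length vs = Suc (Suc (length ks))" using assms by (simp add: compatible_def)
  then obtain v vs' where vs: "vs = v # vs'" and "vs' \<noteq> []"
    by (auto simp: length_Suc_conv)
  moreover obtain ch where "inc_kchain n k ch" "hd ch = v" "last ch = hd vs'"
    using assms vs \<open>vs' \<noteq> []\<close> by (auto simp: compatible_def hd_conv_nth)
  moreover have "compatible n vs' ks"
    unfolding compatible_def
  proof (intro conjI allI impI)
    show "length vs' = length ks + 1" using assms vs by (simp add: compatible_def)
    fix s assume "s < length ks"
    then show "\<exists>c. inc_kchain n (ks ! s) c \<and> hd c = vs' ! s \<and> last c = vs' ! Suc s"
      using assms[unfolded compatible_def, THEN conjunct2, rule_format, of "Suc s"] vs by simp
  qed
  ultimately show ?thesis using that by blast
qed

lemma is_rl_max_hd_compatible: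
  assumes "compatible n vs ks" "distinct ks" "\<forall>k\<in>set ks. 1 \<le> k" "last vs = longest n"
    and "1 \<le> c" "c \<notin> set ks"
  shows "is_rl_max n (hd vs) c"
  using assms
proof (induction ks arbitrary: vs c)
  case Nil
  then have "hd vs = last vs" by (cases vs) (auto simp: compatible_def)
  then show ?case using Nil is_rl_max_longest by simp
next
  case (Cons k ks)
  obtain v vs' ch where vs: "vs = v # vs'" "compatible n vs' ks"
    and ch: "inc_kchain n k ch" "hd ch = v" "last ch = hd vs'"
    using Cons.prems(1) by (rule compatible_ConsE)
  have "vs' \<noteq> []" using vs(2) by (auto simp: compatible_def)
  then have "last vs' = longest n" using vs(1) Cons.prems(4) by simp
  then have "is_rl_max n (hd vs') k" "is_rl_max n (hd vs') c"
    using Cons vs(2) by auto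
  then show ?case
    using is_rl_max_hd_inc_kchain_from[OF inc_kchain_imp_inc_kchain_from[OF ch(1)]] ch vs(1)
      Cons.prems(6) by auto
qed

lemma rl_max_prefix_eq_longest:
  assumes w: "w permutes {1..n}" and "i \<le> n" "1 \<le> i"
    and rl: "\<And>c. 1 \<le> c \<Longrightarrow> c \<le> i \<Longrightarrow> is_rl_max n w c"
  shows "w i = n + 1 - i"
  using assms(2-4)
proof (induction i rule: less_induct)
  case (less i)
  have prefix: "w p = n + 1 - p" if "1 \<le> p" "p < i" for p
    using less that by simp
  have img: "w ` {1..n} = {1..n}" using w by (rule permutes_image)
  moreover have "n + 1 - i \<in> {1..n}" using less.prems by auto
  ultimately obtain p where p: "p \<in> {1..n}" "w p = n + 1 - i"
    by (metis imageE)
  have "w i \<in> {1..n}" using img less.prems by auto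
  consider "p < i" | "p = i" | "i < p" by linarith
  then show ?case
  proof cases
    case 1
    then show ?thesis using prefix[of p] p less.prems by auto
  next
    case 2
    then show ?thesis using p by simp
  next
    case 3
    moreover have "is_rl_max n w i" using less.prems by simp
    ultimately have "w p < w i" using p(1) unfolding is_rl_max_def by auto
    then have "n + 1 - i < w i" using p by simp
    then have "w (n + 1 - w i) = w i" using prefix[of "n + 1 - w i"] \<open>w i \<in> {1..n}\<close> by auto
    then have "n + 1 - w i = i"
      using permutes_inj[OF w] by (simp add: inj_eq)
    then show ?thesis using \<open>w i \<in> {1..n}\<close> by auto
  qed
qed

theorem lemma5p11:
  fixes n :: nat and ks :: "nat list" and w :: "nat \<Rightarrow> nat"
  assumes "w permutes {1..n}"
    and "ks \<noteq> []" and "distinct ks" and "\<forall>k\<in>set ks. 1 \<le> k \<and> k \<le> n - 1"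
    and "\<exists>vs. compatible n vs ks \<and> hd vs = w \<and> last vs = longest n"
  shows "\<forall>i\<in>{1..Min (set ks) - 1}. w i = n + 1 - i"
proof
  fix i assume i: "i \<in> {1..Min (set ks) - 1}"
  obtain vs where vs: "compatible n vs ks" "hd vs = w" "last vs = longest n"
    using assms(5) by blast
  have "Min (set ks) \<in> set ks" using assms(2) by simp
  then have "i < Min (set ks)" "Min (set ks) \<le> n" using i assms(4) by fastforce+
  have "is_rl_max n w c" if "1 \<le> c" "c \<le> i" for c
  proof -
    have "c \<notin> set ks" using that \<open>i < Min (set ks)\<close> by (metis List.finite_set Min_le not_le le_less_trans)
    then show ?thesis using is_rl_max_hd_compatible[OF vs(1) assms(3) _ vs(3)] assms(4) vs(2) that by blast
  qed
  then show "w i = n + 1 - i"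
    using rl_max_prefix_eq_longest[OF assms(1)] i \<open>i < Min (set ks)\<close> \<open>Min (set ks) \<le> n\<close> by simp
qed

end
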